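(* Fix $K\in\mathbb N$ and a realization of the random basis functions. Then there exists a random sequence $(m_i)_{i\ge0}$ of sample sizes such that $\lVert\hat Q^{K,m_i,i}-\tilde Q^K\rVert_\pi\to0$ $\mathbb Q$-almost surely as $i\to\infty$.
   Context: Let $d,N\ge1$, let $X=(X_0,\dots,X_N)$ be a discrete-time Markov process with values in $\mathbb R^d$, $\mathbb Q$ the pricing measure, $\pi_n$ the law of $X_n$ under $\mathbb Q$, $\mathbb E$ expectation under $\mathbb Q$, $g:\mathbb R^d\to[0,\infty)$ a measurable payoff with $g(X_n)$ square integrable, $\alpha\in(0,1)$ the discount factor, $(E_nJ)(x):=\mathbb E[J(X_{n+1})\mid X_n=x]$, $\lVert f\rVert_{\pi_n}^2:=\int|f|^2d\pi_n$. Random basis functions: $\alpha_k\in\mathbb R^{d+1},\beta_k\in\mathbb R$ with i.i.d. standard Gaussian entries, $\phi_k(x,n):=\sigma(\alpha_k^\top(x,n)^\top+\beta_k)$, $\sigma$ a bounded activation function, $\phi_{1:K}:=(\phi_1,\dots,\phi_K)$ (row vector), $(\Phi_{K,n}\theta)(x):=\sum_{k=1}^K\theta_k\phi_k(x,n)$, $\Phi_K\theta:=(\Phi_{K,0}\theta,\dots,\Phi_{K,N-1}\theta)$. On $(L^2)^N:=L^2(\pi_0)\times\dots\times L^2(\pi_{N-1})$ use $\lVert J\rVert_\pi:=\frac1N\sum_{n=0}^{N-1}\lVert J_n\rVert_{\pi_n}$; $\Pi^KJ:=\arg\min_{\Phi_K\theta}\lVert\Phi_K\theta-J\rVert_\pi$;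 $H(J_0,\dots,J_{N-1}):=(\alpha E_0\max(g,J_1),\dots,\alpha E_{N-2}\max(g,J_{N-1}),\alpha E_{N-1}g)$. $\tilde Q^K=\Phi_K\theta_K^\star$ is the unique fixed point of the contraction $\Pi^KH$. Assuming $\mathbb E[\sum_{n=0}^{N-1}\phi_{1:K}^\top(X_n,n)\phi_{1:K}(X_n,n)]$ invertible, iterating $\Pi^KH$ from $\Phi_K\theta_K^0$ corresponds to the weights $\theta_K^{i+1}:=\alpha\big(\mathbb E[\sum_{n}\phi_{1:K}^\top(X_n,n)\phi_{1:K}(X_n,n)]\big)^{-1}\mathbb E[\sum_{n=0}^{N-1}\phi_{1:K}^\top(X_n,n)\max(g(X_{n+1}),(\Phi_{K,n+1}\theta_K^i)(X_{n+1}))]$ (with the $n=N-1$ term read as $g(X_N)$), and $\theta_K^i\to\theta_K^\star$. Implementable version: with i.i.d. samples $(x_0^j,\dots,x_N^j)$, $j=1,\dots,m$, of $X$ under $\mathbb Q$ fixed for all iterations, $\hat\theta^0_{K,m}:=\theta_K^0$ and $\hat\theta^{i+1}_{K,m}$ is given by the same formula with expectations replaced by sums over $j=1,\dots,m$ and $X$ by the samples $x^j$; finally $\hat Q^{K,m,i}:=\Phi_K\hat\theta^i_{K,m}$. *)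

theory Defs
  imports "HOL-Probability.Probability"
begin

text \<open>Random basis functions for a fixed realization of the Gaussian weights:
  alpha_k = (a k, c k) in R^(d+1), beta_k = b k, activation sig.
  phi_k(x,n) = sig(a_k . x + c_k * n + beta_k).\<close>
definition rbf :: "(real \<Rightarrow> real) \<Rightarrow> ('k \<Rightarrow> real^'d) \<Rightarrow> ('k \<Rightarrow> real) \<Rightarrow> ('k \<Rightarrow> real)
    \<Rightarrow> 'k \<Rightarrow> real^'d \<Rightarrow> nat \<Rightarrow> real" where
  "rbf sig a c b k x n = sig (a k \<bullet> x + c k * real n + b k)"

definition Phi :: "('k::finite \<Rightarrow> real^'d \<Rightarrow> nat \<Rightarrow> real) \<Rightarrow> nat \<Rightarrow> real^'k \<Rightarrow> real^'d \<Rightarrow> real" where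
  "Phi phi n \<theta> x = (\<Sum>k\<in>UNIV. \<theta> $ k * phi k x n)"

definition target :: "('k::finite \<Rightarrow> real^'d \<Rightarrow> nat \<Rightarrow> real) \<Rightarrow> (real^'d \<Rightarrow> real) \<Rightarrow> nat \<Rightarrow> nat
    \<Rightarrow> real^'k \<Rightarrow> real^'d \<Rightarrow> real" where
  "target phi g N n \<theta> x = (if Suc n = N then g x else max (g x) (Phi phi (Suc n) \<theta> x))"

definition popGram :: "'w measure \<Rightarrow> (nat \<Rightarrow> 'w \<Rightarrow> real^'d) \<Rightarrow> nat
    \<Rightarrow> ('k::finite \<Rightarrow> real^'d \<Rightarrow> nat \<Rightarrow> real) \<Rightarrow> real^'k^'k" where
  "popGram M X N phi = (\<chi> i j. \<Sum>n<N. \<integral>\<omega>. phi i (X n \<omega>) n * phi j (X n \<omega>) n \<partial>M)"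

definition popMap :: "'w measure \<Rightarrow> (nat \<Rightarrow> 'w \<Rightarrow> real^'d) \<Rightarrow> nat
    \<Rightarrow> ('k::finite \<Rightarrow> real^'d \<Rightarrow> nat \<Rightarrow> real) \<Rightarrow> (real^'d \<Rightarrow> real) \<Rightarrow> real \<Rightarrow> real^'k \<Rightarrow> real^'k" where
  "popMap M X N phi g alpha \<theta> = alpha *\<^sub>R (matrix_inv (popGram M X N phi) *v
      (\<chi> i. \<Sum>n<N. \<integral>\<omega>. phi i (X n \<omega>) n * target phi g N n \<theta> (X (Suc n) \<omega>) \<partial>M))"

text \<open>theta_K^star: the unique fixed point (weights of tilde Q^K).\<close>
definition thetaStar :: "'w measure \<Rightarrow> (nat \<Rightarrow> 'w \<Rightarrow> real^'d) \<Rightarrow> nat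
    \<Rightarrow> ('k::finite \<Rightarrow> real^'d \<Rightarrow> nat \<Rightarrow> real) \<Rightarrow> (real^'d \<Rightarrow> real) \<Rightarrow> real \<Rightarrow> real^'k" where
  "thetaStar M X N phi g alpha = (THE \<theta>. popMap M X N phi g alpha \<theta> = \<theta>)"

definition empMap :: "(nat \<Rightarrow> nat \<Rightarrow> 'w \<Rightarrow> real^'d) \<Rightarrow> nat \<Rightarrow> 'w \<Rightarrow> nat
    \<Rightarrow> ('k::finite \<Rightarrow> real^'d \<Rightarrow> nat \<Rightarrow> real) \<Rightarrow> (real^'d \<Rightarrow> real) \<Rightarrow> real \<Rightarrow> real^'k \<Rightarrow> real^'k" where
  "empMap Y m \<omega> N phi g alpha \<theta> = alpha *\<^sub>R (matrix_inv
      (\<chi> i l. \<Sum>j<m. \<Sum>n<N. phi i (Y j n \<omega>) n * phi l (Y j n \<omega>) n) *v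
      (\<chi> i. \<Sum>j<m. \<Sum>n<N. phi i (Y j n \<omega>) n * target phi g N n \<theta> (Y j (Suc n) \<omega>)))"

definition thetaHat :: "(nat \<Rightarrow> nat \<Rightarrow> 'w \<Rightarrow> real^'d) \<Rightarrow> nat \<Rightarrow> 'w \<Rightarrow> nat
    \<Rightarrow> ('k::finite \<Rightarrow> real^'d \<Rightarrow> nat \<Rightarrow> real) \<Rightarrow> (real^'d \<Rightarrow> real) \<Rightarrow> real \<Rightarrow> real^'k \<Rightarrow> nat \<Rightarrow> real^'k" where
  "thetaHat Y m \<omega> N phi g alpha \<theta>0 i = (empMap Y m \<omega> N phi g alpha ^^ i) \<theta>0"

definition distPi :: "'w measure \<Rightarrow> (nat \<Rightarrow> 'w \<Rightarrow> real^'d) \<Rightarrow> nat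
    \<Rightarrow> (nat \<Rightarrow> real^'d \<Rightarrow> real) \<Rightarrow> (nat \<Rightarrow> real^'d \<Rightarrow> real) \<Rightarrow> real" where
  "distPi M X N J J' = (1 / real N) * (\<Sum>n<N. sqrt (\<integral>x. (J n x - J' n x)\<^sup>2 \<partial>(distr M borel (X n))))"

definition histAlg :: "'w measure \<Rightarrow> (nat \<Rightarrow> 'w \<Rightarrow> real^'d) \<Rightarrow> nat \<Rightarrow> 'w measure" where
  "histAlg M X n = sigma (space M) {X i -` A \<inter> space M | i A. i \<le> n \<and> A \<in> sets borel}"

definition markov :: "'w measure \<Rightarrow> (nat \<Rightarrow> 'w \<Rightarrow> real^'d) \<Rightarrow> nat \<Rightarrow> bool" where
  "markov M X N \<longleftrightarrow> (\<forall>n<N. \<forall>A\<in>sets (borel :: (real^'d) measure).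
     AE \<omega> in M. real_cond_exp M (histAlg M X n) (\<lambda>w. indicator A (X (Suc n) w)) \<omega>
              = real_cond_exp M (vimage_algebra (space M) (X n) borel) (\<lambda>w. indicator A (X (Suc n) w)) \<omega>)"

definition path :: "nat \<Rightarrow> (nat \<Rightarrow> 'w \<Rightarrow> real^'d) \<Rightarrow> 'w \<Rightarrow> nat \<Rightarrow> real^'d" where
  "path N Z \<omega> = (\<lambda>n\<in>{..N}. Z n \<omega>)"

end

theory Submission
  imports Defs
begin

text \<open>
  The population iteration and its sample version are both instances of one least-squares
  scheme over a finite measure, theta |-> alpha G^-1 b(theta), with Gram matrix G and
  regression vector b(theta). Since max (g x) is 1-Lipschitz and the regression target at
  time n only involves the basis functions at time n + 1, each such map is an alpha-contraction
  for the quadratic form v^T G v = sum_n int (Phi_n v)^2.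
  Along the sample sizes m_i = 8^i, Chebyshev's inequality and Borel-Cantelli give almost sure
  convergence of the normalised sample Gram matrix and of the normalised sample regression
  vector at theta*. So for almost every outcome the sample Gram matrices are eventually
  uniformly positive definite, the i-th sample map is an alpha-contraction for its own
  quadratic form and moves theta* by o(1), and i iterations from theta_0 end within o(1) of
  theta*. In particular the deterministic sample sizes 8^i suffice.
\<close>

section \<open>Matrices and quadratic forms\<close>

definition qform :: "real^'n^'n \<Rightarrow> real^'n \<Rightarrow> real" where
  "qform A v = v \<bullet> (A *v v)"

lemma qform_scaleR_right: "qform A (c *\<^sub>R v) = c\<^sup>2 * qform A v"
  by (simp add: qform_def matrix_vector_mult_scaleR power2_eq_square)

lemma qform_scaleR_left: "qform (c *\<^sub>R A) v = c * qform A v"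
  by (simp add: qform_def scaleR_matrix_vector_assoc[symmetric])

lemma qform_diff_left: "qform (A - B) v = qform A v - qform B v"
  by (simp add: qform_def matrix_vector_mult_diff_rdistrib inner_diff_right)

lemma inner_matrix_vector_mult_symmetric:
  fixes A :: "real^'n^'n"
  assumes "transpose A = A"
  shows "v \<bullet> (A *v w) = w \<bullet> (A *v v)"
  by (metis assms dot_lmul_matrix inner_commute transpose_matrix_vector)

lemma qform_add:
  assumes "transpose A = A"
  shows "qform A (a + b) = qform A a + 2 * (a \<bullet> (A *v b)) + qform A b"
  using inner_matrix_vector_mult_symmetric[OF assms, of b a]
  by (simp add: qform_def matrix_vector_right_distrib inner_add_left inner_add_right)

lemma norm_matrix_vector_mult_le:
  fixes A :: "real^'n^'m"
  shows "norm (A *v x) \<le> norm A * norm x"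
proof -
  have "(norm (A *v x))\<^sup>2 = (\<Sum>i\<in>UNIV. (A $ i \<bullet> x)\<^sup>2)"
    unfolding power2_norm_eq_inner inner_vec_def matrix_mult_dot by (simp add: power2_eq_square)
  also have "\<dots> \<le> (\<Sum>i\<in>UNIV. (norm (A $ i))\<^sup>2 * (norm x)\<^sup>2)"
    by (intro sum_mono) (metis Cauchy_Schwarz_ineq2 abs_le_square_iff abs_norm_cancel abs_mult power_mult_distrib)
  also have "\<dots> = (\<Sum>i\<in>UNIV. (norm (A $ i))\<^sup>2) * (norm x)\<^sup>2"
    by (simp add: sum_distrib_right)
  also have "(\<Sum>i\<in>UNIV. (norm (A $ i))\<^sup>2) = (norm A)\<^sup>2"
    by (simp only: power2_norm_eq_inner inner_vec_def)
  finally have "(norm (A *v x))\<^sup>2 \<le> (norm A * norm x)\<^sup>2"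
    by (simp only: power_mult_distrib)
  then show ?thesis
    by (rule power2_le_imp_le) simp
qed

lemma abs_qform_le: "\<bar>qform A v\<bar> \<le> norm A * (norm v)\<^sup>2"
proof -
  have "\<bar>qform A v\<bar> \<le> norm v * norm (A *v v)"
    unfolding qform_def by (rule Cauchy_Schwarz_ineq2)
  also have "\<dots> \<le> norm v * (norm A * norm v)"
    by (intro mult_left_mono norm_matrix_vector_mult_le) simp
  finally show ?thesis
    by (simp add: power2_eq_square mult_ac)
qed

lemma qform_add_le:
  assumes sym: "transpose A = A" and psd: "\<And>v. 0 \<le> qform A v" and t: "0 < t" "t < 1"
  shows "qform A (a + b) \<le> qform A a / t + qform A b / (1 - t)"
proof -
  have "0 \<le> qform A ((1 - t) *\<^sub>R a + (- t) *\<^sub>R b)"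
    by (rule psd)
  also have "\<dots> = (1 - t)\<^sup>2 * qform A a - 2 * t * (1 - t) * (a \<bullet> (A *v b)) + t\<^sup>2 * qform A b"
    unfolding qform_add[OF sym]
    by (simp add: qform_scaleR_right matrix_vector_mult_scaleR del: scaleR_minus_left)
  finally have "t * (1 - t) * qform A (a + b) \<le> (1 - t) * qform A a + t * qform A b"
    unfolding qform_add[OF sym] by (simp add: algebra_simps power2_eq_square)
  also have "\<dots> = t * (1 - t) * (qform A a / t + qform A b / (1 - t))"
    using t by (simp add: field_simps)
  finally show ?thesis
    using t by (simp add: mult_le_cancel_left_pos)
qed

lemma qform_eq_zero_imp_mult_eq_zero:
  assumes sym: "transpose A = A" and psd: "\<And>v. 0 \<le> qform A v" and "qform A v = 0"
  shows "A *v v = 0"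
proof (rule ccontr)
  define w where "w = A *v v"
  assume "A *v v \<noteq> 0"
  then have w_pos: "0 < w \<bullet> w"
    by (simp add: w_def)
  have quadratic: "2 * t * (w \<bullet> w) \<le> t * t * qform A w" for t
  proof -
    have "0 \<le> qform A (v + (- t) *\<^sub>R w)"
      by (rule psd)
    also have "\<dots> = t * t * qform A w - 2 * t * (w \<bullet> w)"
      using \<open>qform A v = 0\<close> inner_matrix_vector_mult_symmetric[OF sym, of v w]
      unfolding qform_add[OF sym]
      by (simp add: qform_scaleR_right matrix_vector_mult_scaleR w_def power2_eq_square del: scaleR_minus_left)
    finally show ?thesis
      by simp
  qed
  define t where "t = (w \<bullet> w) / (qform A w + 1)"
  have t_pos: "0 < t"
    using w_pos psd[of w] by (simp add: t_def)
  have "2 * (w \<bullet> w) \<le> t * qform A w"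
    using quadratic[of t] t_pos by (simp add: mult.assoc mult_le_cancel_left_pos)
  also have "\<dots> \<le> w \<bullet> w"
    using w_pos psd[of w] by (simp add: t_def field_simps)
  finally show False
    using w_pos by simp
qed

lemma continuous_on_qform: "continuous_on S (qform A)"
  unfolding qform_def[abs_def] by (intro continuous_intros)

lemma qform_pd_of_invertible:
  fixes A :: "real^'n^'n"
  assumes sym: "transpose A = A" and psd: "\<And>v. 0 \<le> qform A v" and "invertible A"
  obtains lam where "0 < lam" "\<And>v. lam * (norm v)\<^sup>2 \<le> qform A v"
proof -
  have "sphere (0::real^'n) 1 \<noteq> {}"
    using vector_choose_size[of 1] by auto
  then obtain u where u: "u \<in> sphere 0 1" and u_min: "\<And>y. y \<in> sphere 0 1 \<Longrightarrow> qform A u \<le> qform A y"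
    using continuous_attains_inf[OF compact_sphere _ continuous_on_qform] by blast
  have "A *v u \<noteq> 0"
  proof
    assume "A *v u = 0"
    then have "u = 0"
      using inj_matrix_vector_mult[OF \<open>invertible A\<close>] by (metis injD matrix_vector_mult_0_right)
    with u show False
      by simp
  qed
  then have "0 < qform A u"
    using psd[of u] qform_eq_zero_imp_mult_eq_zero[OF sym psd] by force
  moreover have "qform A u * (norm v)\<^sup>2 \<le> qform A v" for v
  proof (cases "v = 0")
    case False
    then have "qform A u \<le> qform A ((1 / norm v) *\<^sub>R v)"
      by (intro u_min) simp
    then show ?thesis
      using False by (simp add: qform_scaleR_right field_simps)
  qed (simp add: qform_def)
  ultimately show ?thesis
    using that by blast
qed

lemma invertible_of_qform_pd:
  fixes A :: "real^'n^'n"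
  assumes "0 < lam" "\<And>v. lam * (norm v)\<^sup>2 \<le> qform A v"
  shows "invertible A"
proof -
  have "inj ((*v) A)"
  proof (rule injI)
    fix x y assume "A *v x = A *v y"
    then have "qform A (x - y) = 0"
      by (simp add: qform_def matrix_vector_mult_diff_distrib)
    then show "x = y"
      using assms(2)[of "x - y"] \<open>0 < lam\<close> by (simp add: mult_le_0_iff)
  qed
  then show ?thesis
    using matrix_left_invertible_injective invertible_left_inverse by blast
qed

lemma matrix_inv_right:
  fixes A :: "'a::semiring_1^'n^'n"
  assumes "invertible A"
  shows "A ** matrix_inv A = mat 1"
  using someI_ex[OF assms[unfolded invertible_def]] by (simp add: matrix_inv_def)

lemma tendsto_matrix_vector_mult:
  fixes A :: "'a \<Rightarrow> real^'n^'m"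
  assumes "(A \<longlongrightarrow> B) F"
  shows "((\<lambda>i. A i *v x) \<longlongrightarrow> B *v x) F"
proof (rule vec_tendstoI)
  fix k
  show "((\<lambda>i. (A i *v x) $ k) \<longlongrightarrow> (B *v x) $ k) F"
    unfolding matrix_vector_mult_def vec_lambda_beta
    by (intro tendsto_sum tendsto_mult_right tendsto_vec_nth assms)
qed

section \<open>Contractions with respect to a quadratic form\<close>

lemma qform_funpow_contraction:
  assumes contr: "\<And>\<theta> \<theta>'. qform A (T \<theta> - T \<theta>') \<le> c * qform A (\<theta> - \<theta>')" and "0 \<le> c"
  shows "qform A ((T ^^ n) \<theta> - (T ^^ n) \<theta>') \<le> c ^ n * qform A (\<theta> - \<theta>')"
proof (induction n)
  case (Suc n)
  have "qform A ((T ^^ Suc n) \<theta> - (T ^^ Suc n) \<theta>') \<le> c * qform A ((T ^^ n) \<theta> - (T ^^ n) \<theta>')"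
    using contr by simp
  also have "\<dots> \<le> c * (c ^ n * qform A (\<theta> - \<theta>'))"
    using Suc.IH \<open>0 \<le> c\<close> by (rule mult_left_mono)
  finally show ?case
    by (simp add: mult.assoc)
qed simp

lemma qform_nonneg_of_pd:
  assumes "0 \<le> lam" "\<And>v. lam * (norm v)\<^sup>2 \<le> qform A v"
  shows "0 \<le> qform A v"
  using assms(2)[of v] assms(1) by (meson mult_nonneg_nonneg order_trans zero_le_power2)

lemma qform_contraction_funpow_half_lipschitz:
  fixes T :: "real^'n \<Rightarrow> real^'n"
  assumes pd: "0 < lam" "\<And>v. lam * (norm v)\<^sup>2 \<le> qform A v"
    and contr: "\<And>\<theta> \<theta>'. qform A (T \<theta> - T \<theta>') \<le> c * qform A (\<theta> - \<theta>')" and c: "0 \<le> c" "c < 1"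
  obtains n where "\<And>x y. dist ((T ^^ n) x) ((T ^^ n) y) \<le> 1/2 * dist x y"
proof -
  define C where "C = norm A + 1"
  have C_pos: "0 < C"
    by (simp add: C_def add_nonneg_pos)
  have upper: "qform A v \<le> C * (norm v)\<^sup>2" for v
    using abs_qform_le[of A v] zero_le_power2[of "norm v"] unfolding C_def distrib_right abs_le_iff
    by linarith
  have psd: "0 \<le> qform A v" for v
    using pd(1) by (intro qform_nonneg_of_pd[OF _ pd(2)]) simp
  have "0 < lam / (4 * C)"
    using pd(1) C_pos by simp
  then obtain n where n: "c ^ n < lam / (4 * C)"
    using real_arch_pow_inv c(2) by blast
  have "dist ((T ^^ n) x) ((T ^^ n) y) \<le> 1/2 * dist x y" for x y
  proof -
    have "lam * (norm ((T ^^ n) x - (T ^^ n) y))\<^sup>2 \<le> c ^ n * qform A (x - y)"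
      using pd(2) qform_funpow_contraction[OF contr c(1)] by (rule order_trans)
    also have "\<dots> \<le> lam / (4 * C) * (C * (norm (x - y))\<^sup>2)"
      using n psd upper pd(1) C_pos by (intro mult_mono) auto
    also have "\<dots> = lam * (1/2 * norm (x - y))\<^sup>2"
      using C_pos by (simp add: power2_eq_square field_simps)
    finally have "(norm ((T ^^ n) x - (T ^^ n) y))\<^sup>2 \<le> (1/2 * norm (x - y))\<^sup>2"
      using pd(1) by (simp add: mult_le_cancel_left_pos)
    then show ?thesis
      unfolding dist_norm by (rule power2_le_imp_le) simp
  qed
  then show ?thesis
    by (rule that)
qed

lemma qform_contraction_unique_fixpoint:
  fixes T :: "real^'n \<Rightarrow> real^'n"
  assumes pd: "0 < lam" "\<And>v. lam * (norm v)\<^sup>2 \<le> qform A v"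
    and contr: "\<And>\<theta> \<theta>'. qform A (T \<theta> - T \<theta>') \<le> c * qform A (\<theta> - \<theta>')" and c: "0 \<le> c" "c < 1"
  shows "\<exists>!\<theta>. T \<theta> = \<theta>"
proof -
  obtain n where lipschitz: "\<And>x y. dist ((T ^^ n) x) ((T ^^ n) y) \<le> 1/2 * dist x y"
    using qform_contraction_funpow_half_lipschitz[OF pd contr c] by blast
  have "\<exists>!p. (T ^^ n) p = p"
    by (rule banach_fix_type[of "1/2"]) (use lipschitz in simp_all)
  then obtain p where p: "(T ^^ n) p = p" and p_unique: "\<And>z. (T ^^ n) z = z \<Longrightarrow> z = p"
    by (rule ex1E) blast
  have "(T ^^ n) (T p) = T p"
    by (metis funpow_swap1 p)
  then have fix_p: "T p = p"
    by (rule p_unique)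
  have "z = p" if "T z = z" for z
  proof -
    have "qform A (z - p) \<le> c * qform A (z - p)"
      using contr[of z p] that fix_p by simp
    then have "(1 - c) * qform A (z - p) \<le> 0"
      by (simp add: algebra_simps)
    then have "qform A (z - p) \<le> 0"
      using c(2) by (simp add: mult_le_0_iff)
    then have "lam * (norm (z - p))\<^sup>2 \<le> 0"
      using pd(2) order_trans by blast
    then show ?thesis
      using pd(1) by (simp add: mult_le_0_iff)
  qed
  with fix_p show ?thesis
    by blast
qed

lemma qform_bounds_eventually:
  assumes "H \<longlonglongrightarrow> G" and pd: "0 < lam" "\<And>v. lam * (norm v)\<^sup>2 \<le> qform G v"
  shows "eventually (\<lambda>i. \<forall>v. lam / 2 * (norm v)\<^sup>2 \<le> qform (H i) v
    \<and> qform (H i) v \<le> (norm G + lam / 2) * (norm v)\<^sup>2) sequentially"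
proof -
  have "eventually (\<lambda>i. dist (H i) G < lam / 2) sequentially"
    using assms(1) pd(1) by (intro tendstoD) auto
  then show ?thesis
  proof eventually_elim
    case (elim i)
    show ?case
    proof
      fix v
      have "\<bar>qform (H i) v - qform G v\<bar> \<le> norm (H i - G) * (norm v)\<^sup>2"
        using abs_qform_le[of "H i - G" v] by (simp add: qform_diff_left)
      also have "\<dots> \<le> lam / 2 * (norm v)\<^sup>2"
        using elim by (intro mult_right_mono) (simp_all add: dist_norm)
      finally have "\<bar>qform (H i) v - qform G v\<bar> \<le> lam / 2 * (norm v)\<^sup>2" .
      moreover have "\<bar>qform G v\<bar> \<le> norm G * (norm v)\<^sup>2"
        by (rule abs_qform_le)
      ultimately show "lam / 2 * (norm v)\<^sup>2 \<le> qform (H i) v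
          \<and> qform (H i) v \<le> (norm G + lam / 2) * (norm v)\<^sup>2"
        using pd(2)[of v] unfolding abs_le_iff distrib_right by linarith
    qed
  qed
qed

lemma tendsto_zero_of_qform_pd:
  assumes pd: "eventually (\<lambda>i. \<forall>v. c * (norm v)\<^sup>2 \<le> qform (H i) v) sequentially" "0 < c"
    and "(\<lambda>i. H i *v x i) \<longlonglongrightarrow> 0"
  shows "x \<longlonglongrightarrow> 0"
proof (rule Lim_null_comparison)
  show "eventually (\<lambda>i. norm (x i) \<le> norm (H i *v x i) / c) sequentially"
    using pd(1)
  proof eventually_elim
    case (elim i)
    have "c * (norm (x i))\<^sup>2 \<le> x i \<bullet> (H i *v x i)"
      using elim unfolding qform_def by blast
    also have "\<dots> \<le> norm (x i) * norm (H i *v x i)"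
      by (rule norm_cauchy_schwarz)
    finally have cs: "c * (norm (x i))\<^sup>2 \<le> norm (x i) * norm (H i *v x i)" .
    have "c * norm (x i) \<le> norm (H i *v x i)"
    proof (cases "x i = 0")
      case False
      have "(c * norm (x i)) * norm (x i) \<le> norm (H i *v x i) * norm (x i)"
        using cs by (simp add: power2_eq_square mult_ac)
      then show ?thesis
        by (rule mult_right_le_imp_le) (use False in simp)
    qed simp
    then show ?case
      using pd(2) by (simp add: field_simps)
  qed
  show "(\<lambda>i. norm (H i *v x i) / c) \<longlonglongrightarrow> 0"
    using assms(3) by (intro tendsto_divide_zero tendsto_norm_zero)
qed

lemma eventually_invertible_of_tendsto:
  assumes "H \<longlonglongrightarrow> G" "0 < lam" "\<And>v. lam * (norm v)\<^sup>2 \<le> qform G v"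
  shows "eventually (\<lambda>i. invertible (H i)) sequentially"
  using qform_bounds_eventually[OF assms]
  by eventually_elim (rule invertible_of_qform_pd[of "lam / 2"], use assms(2) in auto)

lemma matrix_equation_solution_tendsto:
  assumes "H \<longlonglongrightarrow> G" "0 < lam" "\<And>v. lam * (norm v)\<^sup>2 \<le> qform G v"
    and "eventually (\<lambda>i. H i *v x i = y i) sequentially" "y \<longlonglongrightarrow> G *v x0"
  shows "x \<longlonglongrightarrow> x0"
proof -
  have "eventually (\<lambda>i. y i - H i *v x0 = H i *v (x i - x0)) sequentially"
    using assms(4) by eventually_elim (simp add: matrix_vector_mult_diff_distrib)
  moreover have "(\<lambda>i. y i - H i *v x0) \<longlonglongrightarrow> 0"
    using tendsto_diff[OF assms(5) tendsto_matrix_vector_mult[OF assms(1), of x0]] by simp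
  ultimately have residual_lim: "(\<lambda>i. H i *v (x i - x0)) \<longlonglongrightarrow> 0"
    by (rule Lim_transform_eventually[rotated])
  have "eventually (\<lambda>i. \<forall>v. lam / 2 * (norm v)\<^sup>2 \<le> qform (H i) v) sequentially"
    using qform_bounds_eventually[OF assms(1-3)] by (rule eventually_mono) blast
  then have "(\<lambda>i. x i - x0) \<longlonglongrightarrow> 0"
    by (rule tendsto_zero_of_qform_pd[OF _ _ residual_lim]) (use assms(2) in simp)
  then show ?thesis
    by (simp add: LIM_zero_iff)
qed

text \<open>
  With t = alpha in \<open>qform_add_le\<close>, an alpha^2-contraction becomes an alpha-contraction up to
  the defect T t - t of the candidate fixed point t.
\<close>

lemma qform_iterate_error_le:
  assumes sym: "transpose H = H" and psd: "\<And>v. 0 \<le> qform H v"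
    and contr: "\<And>\<theta> \<theta>'. qform H (T \<theta> - T \<theta>') \<le> \<alpha>\<^sup>2 * qform H (\<theta> - \<theta>')"
    and \<alpha>: "0 < \<alpha>" "\<alpha> < 1"
  shows "qform H ((T ^^ k) \<theta>0 - t) \<le> \<alpha> ^ k * qform H (\<theta>0 - t) + qform H (T t - t) / (1 - \<alpha>)\<^sup>2"
proof (induction k)
  case (Suc k)
  let ?e = "qform H ((T ^^ k) \<theta>0 - t)" and ?d = "qform H (T t - t)"
  have "qform H ((T ^^ Suc k) \<theta>0 - t) = qform H ((T ((T ^^ k) \<theta>0) - T t) + (T t - t))"
    by simp
  also have "\<dots> \<le> qform H (T ((T ^^ k) \<theta>0) - T t) / \<alpha> + ?d / (1 - \<alpha>)"
    by (rule qform_add_le[OF sym psd \<alpha>])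
  also have "\<dots> \<le> \<alpha>\<^sup>2 * ?e / \<alpha> + ?d / (1 - \<alpha>)"
    using contr \<alpha> by (intro add_right_mono divide_right_mono) auto
  also have "\<dots> \<le> \<alpha> * (\<alpha> ^ k * qform H (\<theta>0 - t) + ?d / (1 - \<alpha>)\<^sup>2) + ?d / (1 - \<alpha>)"
    using Suc.IH \<alpha> by (simp add: power2_eq_square)
  also have "\<dots> = \<alpha> ^ Suc k * qform H (\<theta>0 - t) + ?d / (1 - \<alpha>)\<^sup>2"
    using \<alpha> by (simp add: divide_simps power2_eq_square) (simp add: algebra_simps)
  finally show ?case .
qed (simp add: psd)

lemma iterates_tendsto_fixpoint:
  fixes H :: "nat \<Rightarrow> real^'n^'n" and T :: "nat \<Rightarrow> real^'n \<Rightarrow> real^'n"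
  assumes "H \<longlonglongrightarrow> G" and pd: "0 < lam" "\<And>v. lam * (norm v)\<^sup>2 \<le> qform G v"
    and sym: "\<And>i. transpose (H i) = H i"
    and contr: "eventually (\<lambda>i. \<forall>\<theta> \<theta>'. qform (H i) (T i \<theta> - T i \<theta>') \<le> \<alpha>\<^sup>2 * qform (H i) (\<theta> - \<theta>')) sequentially"
    and \<alpha>: "0 < \<alpha>" "\<alpha> < 1"
    and "(\<lambda>i. T i t) \<longlonglongrightarrow> t"
  shows "(\<lambda>i. (T i ^^ i) \<theta>0) \<longlonglongrightarrow> t"
proof -
  define C where "C = norm G + lam / 2"
  define bound where "bound i = 2 / lam * (\<alpha> ^ i * (C * (norm (\<theta>0 - t))\<^sup>2) + C * (norm (T i t - t))\<^sup>2 / (1 - \<alpha>)\<^sup>2)" for i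
  have step_tendsto: "(\<lambda>i. norm (T i t - t)) \<longlonglongrightarrow> 0"
    using assms(8) by (simp add: tendsto_norm_zero_iff LIM_zero_iff)
  have error_le_bound: "eventually (\<lambda>i. (norm ((T i ^^ i) \<theta>0 - t))\<^sup>2 \<le> bound i) sequentially"
    using qform_bounds_eventually[OF assms(1) pd] contr
  proof eventually_elim
    case (elim i)
    then have psd: "0 \<le> qform (H i) v" for v
      using pd(1) by (intro qform_nonneg_of_pd[of "lam / 2"]) auto
    have "lam / 2 * (norm ((T i ^^ i) \<theta>0 - t))\<^sup>2 \<le> qform (H i) ((T i ^^ i) \<theta>0 - t)"
      using elim by blast
    also have "\<dots> \<le> \<alpha> ^ i * qform (H i) (\<theta>0 - t) + qform (H i) (T i t - t) / (1 - \<alpha>)\<^sup>2"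
      using elim by (intro qform_iterate_error_le[OF sym psd _ \<alpha>]) blast
    also have "\<dots> \<le> \<alpha> ^ i * (C * (norm (\<theta>0 - t))\<^sup>2) + C * (norm (T i t - t))\<^sup>2 / (1 - \<alpha>)\<^sup>2"
      using elim \<alpha> unfolding C_def by (intro add_mono mult_left_mono divide_right_mono) auto
    finally show ?case
      using pd(1) by (simp add: bound_def field_simps)
  qed
  have "bound \<longlonglongrightarrow> 2 / lam * (0 * (C * (norm (\<theta>0 - t))\<^sup>2) + C * 0\<^sup>2 / (1 - \<alpha>)\<^sup>2)"
    unfolding bound_def using \<alpha>
    by (intro tendsto_mult tendsto_add tendsto_divide tendsto_power tendsto_const
        LIMSEQ_realpow_zero step_tendsto) auto
  then have "bound \<longlonglongrightarrow> 0"
    by simp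
  then have "(\<lambda>i. (norm ((T i ^^ i) \<theta>0 - t))\<^sup>2) \<longlonglongrightarrow> 0"
    by (intro tendsto_sandwich[OF _ error_le_bound tendsto_const]) simp
  then have "(\<lambda>i. sqrt ((norm ((T i ^^ i) \<theta>0 - t))\<^sup>2)) \<longlonglongrightarrow> sqrt 0"
    by (rule tendsto_real_sqrt)
  then have "(\<lambda>i. norm ((T i ^^ i) \<theta>0 - t)) \<longlonglongrightarrow> 0"
    by simp
  then show ?thesis
    by (simp add: tendsto_norm_zero_iff LIM_zero_iff)
qed

section \<open>A strong law of large numbers along sample sizes 8^i\<close>

lemma (in prob_space) expectation_square_sum_indep_centered:
  fixes W :: "nat \<Rightarrow> 'a \<Rightarrow> real"
  assumes indep: "indep_vars (\<lambda>_. borel) W UNIV"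
    and [measurable]: "\<And>j. W j \<in> borel_measurable M"
    and square_int: "\<And>j. integrable M (\<lambda>x. (W j x)\<^sup>2)"
    and centered: "\<And>j. expectation (W j) = 0"
  shows "integrable M (\<lambda>x. (\<Sum>j<m. W j x)\<^sup>2)"
    and "expectation (\<lambda>x. (\<Sum>j<m. W j x)\<^sup>2) = (\<Sum>j<m. expectation (\<lambda>x. (W j x)\<^sup>2))"
proof -
  have int: "integrable M (W j)" for j
    by (rule square_integrable_imp_integrable[OF _ square_int]) simp
  have indep_pair: "indep_vars (\<lambda>_. borel) W {j, k}" for j k
    by (rule indep_vars_subset[OF indep]) auto
  have int_prod: "integrable M (\<lambda>x. W j x * W k x)" for j k
  proof (cases "j = k")
    case False
    have "integrable M (\<lambda>x. \<Prod>i\<in>{j, k}. W i x)"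
      by (rule indep_vars_integrable[OF _ indep_pair]) (auto intro: int)
    with False show ?thesis by simp
  qed (use square_int in \<open>simp add: power2_eq_square\<close>)
  have uncorrelated: "expectation (\<lambda>x. W j x * W k x) = (if k = j then expectation (\<lambda>x. (W j x)\<^sup>2) else 0)" for j k
  proof (cases "j = k")
    case False
    have "expectation (\<lambda>x. \<Prod>i\<in>{j, k}. W i x) = (\<Prod>i\<in>{j, k}. expectation (W i))"
      by (rule indep_vars_lebesgue_integral[OF _ indep_pair]) (auto intro: int)
    with False centered show ?thesis by simp
  qed (simp add: power2_eq_square)
  show "integrable M (\<lambda>x. (\<Sum>j<m. W j x)\<^sup>2)"
    using int_prod by (simp add: power2_eq_square sum_product)
  have "expectation (\<lambda>x. (\<Sum>j<m. W j x)\<^sup>2) = (\<Sum>j<m. \<Sum>k<m. expectation (\<lambda>x. W j x * W k x))"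
    using int_prod by (simp add: power2_eq_square sum_product)
  then show "expectation (\<lambda>x. (\<Sum>j<m. W j x)\<^sup>2) = (\<Sum>j<m. expectation (\<lambda>x. (W j x)\<^sup>2))"
    by (simp add: uncorrelated)
qed

lemma (in prob_space) prob_sum_deviation_square_pow8_le:
  fixes Z :: "nat \<Rightarrow> 'a \<Rightarrow> real"
  assumes indep: "indep_vars (\<lambda>_. borel) Z UNIV"
    and [measurable]: "\<And>j. Z j \<in> borel_measurable M"
    and square_int: "\<And>j. integrable M (\<lambda>x. (Z j x)\<^sup>2)"
    and mean: "\<And>j. expectation (Z j) = \<mu>"
    and variance: "\<And>j. expectation (\<lambda>x. (Z j x - \<mu>)\<^sup>2) \<le> V"
  shows "prob {x\<in>space M. 16^i \<le> (\<Sum>j<8^i. Z j x - \<mu>)\<^sup>2} \<le> V * (1/2)^i"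
proof -
  define W where "W j x = Z j x - \<mu>" for j x
  have int: "integrable M (Z j)" for j
    by (rule square_integrable_imp_integrable[OF _ square_int]) simp
  have W_indep: "indep_vars (\<lambda>_. borel) W UNIV"
    unfolding W_def by (rule indep_vars_compose2[OF indep, where Y="\<lambda>_ z. z - \<mu>"]) auto
  have W_measurable: "W j \<in> borel_measurable M" for j
    unfolding W_def by measurable
  have W_centered: "expectation (W j) = 0" for j
    unfolding W_def[abs_def] using int[of j] mean[of j] by (simp add: prob_space)
  have W_square_int: "integrable M (\<lambda>x. (W j x)\<^sup>2)" for j
    using square_int int by (simp add: W_def power2_diff)
  note sum_square =
    expectation_square_sum_indep_centered[OF W_indep W_measurable W_square_int W_centered, unfolded W_def]
  have "prob {x\<in>space M. 16^i \<le> (\<Sum>j<8^i. Z j x - \<mu>)\<^sup>2} \<le> expectation (\<lambda>x. (\<Sum>j<8^i. Z j x - \<mu>)\<^sup>2) / 16^i"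
    by (rule integral_Markov_inequality_measure) (auto intro: sum_square)
  also have "\<dots> \<le> 8^i * V / 16^i"
  proof (rule divide_right_mono)
    have "expectation (\<lambda>x. (\<Sum>j<8^i. Z j x - \<mu>)\<^sup>2) = (\<Sum>j<8^i. expectation (\<lambda>x. (Z j x - \<mu>)\<^sup>2))"
      by (rule sum_square(2))
    also have "\<dots> \<le> (\<Sum>j<(8::nat)^i. V)"
      by (rule sum_mono) (rule variance)
    finally show "expectation (\<lambda>x. (\<Sum>j<8^i. Z j x - \<mu>)\<^sup>2) \<le> 8^i * V"
      by simp
  qed simp
  also have "(8::real)^i * V / 16^i = V * (1/2)^i"
  proof -
    have "(16::real)^i = 8^i * 2^i"
      by (simp flip: power_mult_distrib)
    then show ?thesis
      by (simp add: power_one_over)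
  qed
  finally show ?thesis .
qed

lemma (in prob_space) AE_average_pow8_tendsto:
  fixes Z :: "nat \<Rightarrow> 'a \<Rightarrow> real"
  assumes indep: "indep_vars (\<lambda>_. borel) Z UNIV"
    and [measurable]: "\<And>j. Z j \<in> borel_measurable M"
    and square_int: "\<And>j. integrable M (\<lambda>x. (Z j x)\<^sup>2)"
    and mean: "\<And>j. expectation (Z j) = \<mu>"
    and variance: "\<And>j. expectation (\<lambda>x. (Z j x - \<mu>)\<^sup>2) \<le> V"
  shows "AE x in M. (\<lambda>i. (\<Sum>j<8^i. Z j x) / 8^i) \<longlonglongrightarrow> \<mu>"
proof -
  define S where "S i x = (\<Sum>j<8^i. Z j x - \<mu>)" for i x
  \<comment> \<open>A i is the event |S i x / 8^i| \<ge> 2^-i; its probabilities are summable, so Borel-Cantelli applies.\<close>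
  define A where "A i = {x\<in>space M. 16^i \<le> (S i x)\<^sup>2}" for i :: nat
  have [measurable]: "A i \<in> sets M" for i
    unfolding A_def S_def by measurable
  have "summable (\<lambda>i. V * (1/2::real)^i)"
    by (intro summable_mult summable_geometric) simp
  then have "summable (\<lambda>i. measure M (A i))"
    unfolding A_def S_def
    by (rule summable_comparison_test') (simp add: prob_sum_deviation_square_pow8_le[OF assms])
  then have "AE x in M. eventually (\<lambda>i. x \<in> space M - A i) sequentially"
    by (intro borel_cantelli_AE1) (auto simp: emeasure_finite less_top[symmetric])
  then show ?thesis
  proof (rule AE_mp, intro AE_I2 impI)
    fix x assume "eventually (\<lambda>i. x \<in> space M - A i) sequentially"
    then have "eventually (\<lambda>i. norm (S i x / 8^i) \<le> (1/2)^i) sequentially"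
    proof eventually_elim
      case (elim i)
      have "(S i x)\<^sup>2 \<le> (4^i)\<^sup>2"
        using elim by (auto simp: A_def power2_eq_square simp flip: power_mult_distrib)
      then have "\<bar>S i x\<bar> \<le> 4^i"
        using abs_le_square_iff[of "S i x" "4^i"] by simp
      moreover have "(8::real)^i = 4^i * 2^i"
        by (simp flip: power_mult_distrib)
      ultimately show ?case
        by (simp add: power_one_over field_simps)
    qed
    then have "(\<lambda>i. S i x / 8^i) \<longlonglongrightarrow> 0"
      by (rule Lim_null_comparison) (simp add: LIMSEQ_realpow_zero)
    moreover have "S i x / 8^i = (\<Sum>j<8^i. Z j x) / 8^i - \<mu>" for i
      by (simp add: S_def sum_subtractf field_simps)
    ultimately show "(\<lambda>i. (\<Sum>j<8^i. Z j x) / 8^i) \<longlonglongrightarrow> \<mu>"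
      by (simp add: LIM_zero_iff)
  qed
qed

section \<open>The least-squares iteration\<close>

text \<open>
  U n and V n play the roles of X_n and X_(n+1). The sample version of the scheme is the
  one for the counting measure on the sample indices (\<open>empMap_eq_lsq_step\<close>).
\<close>

definition gram :: "'a measure \<Rightarrow> (nat \<Rightarrow> 'a \<Rightarrow> real^'d) \<Rightarrow> nat
    \<Rightarrow> ('k::finite \<Rightarrow> real^'d \<Rightarrow> nat \<Rightarrow> real) \<Rightarrow> real^'k^'k" where
  "gram \<mu> U N phi = (\<chi> i l. \<Sum>n<N. \<integral>\<omega>. phi i (U n \<omega>) n * phi l (U n \<omega>) n \<partial>\<mu>)"

definition regr :: "'a measure \<Rightarrow> (nat \<Rightarrow> 'a \<Rightarrow> real^'d) \<Rightarrow> (nat \<Rightarrow> 'a \<Rightarrow> real^'d) \<Rightarrow> nat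
    \<Rightarrow> ('k::finite \<Rightarrow> real^'d \<Rightarrow> nat \<Rightarrow> real) \<Rightarrow> (real^'d \<Rightarrow> real) \<Rightarrow> real^'k \<Rightarrow> real^'k" where
  "regr \<mu> U V N phi g \<theta> = (\<chi> i. \<Sum>n<N. \<integral>\<omega>. phi i (U n \<omega>) n * target phi g N n \<theta> (V n \<omega>) \<partial>\<mu>)"

definition lsq_step :: "'a measure \<Rightarrow> (nat \<Rightarrow> 'a \<Rightarrow> real^'d) \<Rightarrow> (nat \<Rightarrow> 'a \<Rightarrow> real^'d) \<Rightarrow> nat
    \<Rightarrow> ('k::finite \<Rightarrow> real^'d \<Rightarrow> nat \<Rightarrow> real) \<Rightarrow> (real^'d \<Rightarrow> real) \<Rightarrow> real \<Rightarrow> real^'k \<Rightarrow> real^'k" where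
  "lsq_step \<mu> U V N phi g \<alpha> \<theta> = \<alpha> *\<^sub>R (matrix_inv (gram \<mu> U N phi) *v regr \<mu> U V N phi g \<theta>)"

lemma popMap_eq_lsq_step: "popMap M X N phi g \<alpha> = lsq_step M X (\<lambda>n. X (Suc n)) N phi g \<alpha>"
  by (simp add: fun_eq_iff popMap_def lsq_step_def popGram_def gram_def regr_def)

lemma empMap_eq_lsq_step:
  "empMap Y m \<omega> N phi g \<alpha> = lsq_step (count_space {..<m}) (\<lambda>n j. Y j n \<omega>) (\<lambda>n j. Y j (Suc n) \<omega>) N phi g \<alpha>"
  by (simp add: fun_eq_iff empMap_def lsq_step_def gram_def regr_def
      lebesgue_integral_count_space_finite sum.swap[of _ "{..<m}"])

lemma Phi_diff: "Phi phi n (v - w) x = Phi phi n v x - Phi phi n w x"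
  by (simp add: Phi_def algebra_simps sum_subtractf)

lemma abs_Phi_le:
  assumes "\<And>k x n. \<bar>phi k x n\<bar> \<le> B"
  shows "\<bar>Phi phi n v x\<bar> \<le> B * (\<Sum>k\<in>UNIV. \<bar>v $ k\<bar>)"
proof -
  have "\<bar>Phi phi n v x\<bar> \<le> (\<Sum>k\<in>UNIV. \<bar>v $ k * phi k x n\<bar>)"
    unfolding Phi_def by (rule sum_abs)
  also have "\<dots> \<le> (\<Sum>k\<in>UNIV. \<bar>v $ k\<bar> * B)"
    by (rule sum_mono) (simp add: abs_mult assms mult_left_mono)
  finally show ?thesis
    by (simp add: sum_distrib_left mult.commute)
qed

lemma abs_target_diff_le:
  "\<bar>target phi g N n \<theta> x - target phi g N n \<theta>' x\<bar>
    \<le> (if Suc n = N then 0 else \<bar>Phi phi (Suc n) (\<theta> - \<theta>') x\<bar>)"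
  by (auto simp: target_def Phi_diff max_def)

lemma abs_target_le:
  assumes "\<And>k x n. \<bar>phi k x n\<bar> \<le> B"
  shows "\<bar>target phi g N n \<theta> x\<bar> \<le> \<bar>g x\<bar> + B * (\<Sum>k\<in>UNIV. \<bar>\<theta> $ k\<bar>)"
proof -
  have "0 \<le> B * (\<Sum>k\<in>UNIV. \<bar>\<theta> $ k\<bar>)"
    using assms[of undefined undefined 0] by (intro mult_nonneg_nonneg sum_nonneg) auto
  moreover have "\<bar>Phi phi (Suc n) \<theta> x\<bar> \<le> B * (\<Sum>k\<in>UNIV. \<bar>\<theta> $ k\<bar>)"
    by (rule abs_Phi_le[OF assms])
  ultimately show ?thesis
    by (auto simp: target_def max_def)
qed

lemma sum_lessThan_shift_le:
  fixes h :: "nat \<Rightarrow> real"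
  assumes "\<And>n. 0 \<le> h n"
  shows "(\<Sum>n<N. if Suc n = N then 0 else h (Suc n)) \<le> (\<Sum>n<N. h n)"
proof (cases N)
  case (Suc M)
  have "(\<Sum>n<N. if Suc n = N then 0 else h (Suc n)) = (\<Sum>n<M. h (Suc n))"
    unfolding Suc by (simp add: sum.lessThan_Suc)
  also have "\<dots> \<le> h 0 + (\<Sum>n<M. h (Suc n))"
    using assms by simp
  also have "\<dots> = (\<Sum>n<N. h n)"
    unfolding Suc by (rule sum.lessThan_Suc_shift[symmetric])
  finally show ?thesis .
qed simp

locale lsq_setting = finite_measure \<mu> for \<mu> :: "'a measure" +
  fixes U V :: "nat \<Rightarrow> 'a \<Rightarrow> real^'d" and N :: nat
    and phi :: "'k::finite \<Rightarrow> real^'d \<Rightarrow> nat \<Rightarrow> real" and g :: "real^'d \<Rightarrow> real"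
    and \<alpha> B :: real
  assumes U_measurable: "\<And>n. n < N \<Longrightarrow> U n \<in> borel_measurable \<mu>"
    and V_measurable: "\<And>n. n < N \<Longrightarrow> V n \<in> borel_measurable \<mu>"
    and phi_measurable[measurable]: "\<And>k n. (\<lambda>x. phi k x n) \<in> borel_measurable borel"
    and phi_bounded: "\<And>k x n. \<bar>phi k x n\<bar> \<le> B"
    and g_measurable[measurable]: "g \<in> borel_measurable borel"
    and g_square_integrable: "\<And>n. n < N \<Longrightarrow> integrable \<mu> (\<lambda>\<omega>. (g (V n \<omega>))\<^sup>2)"
    and V_shift: "\<And>n. Suc n < N \<Longrightarrow> V n = U (Suc n)"
    and alpha_nonneg: "0 \<le> \<alpha>"
begin

abbreviation G where "G \<equiv> gram \<mu> U N phi"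
abbreviation T where "T \<equiv> lsq_step \<mu> U V N phi g \<alpha>"

lemma B_nonneg: "0 \<le> B"
  using phi_bounded[of undefined undefined 0] by linarith

lemma Phi_measurable[measurable]: "(\<lambda>x. Phi phi n v x) \<in> borel_measurable borel"
  unfolding Phi_def by measurable

lemma target_measurable[measurable]: "(\<lambda>x. target phi g N n \<theta> x) \<in> borel_measurable borel"
  unfolding target_def by measurable

lemma integrable_bounded:
  fixes f :: "'a \<Rightarrow> real"
  assumes "f \<in> borel_measurable \<mu>" "\<And>\<omega>. \<bar>f \<omega>\<bar> \<le> C"
  shows "integrable \<mu> f"
  by (rule integrable_const_bound[where B=C]) (use assms in auto)

lemma integrable_square_bounded:
  fixes f :: "'a \<Rightarrow> real"
  assumes "f \<in> borel_measurable \<mu>" "\<And>\<omega>. \<bar>f \<omega>\<bar> \<le> C"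
  shows "integrable \<mu> (\<lambda>\<omega>. (f \<omega>)\<^sup>2)"
proof (rule integrable_bounded)
  show "\<bar>(f \<omega>)\<^sup>2\<bar> \<le> C\<^sup>2" for \<omega>
    using assms(2)[of \<omega>] by (simp add: abs_le_square_iff[symmetric] power2_abs)
qed (use assms(1) in measurable)

lemma square_integrable_Phi:
  assumes "n < N"
  shows "integrable \<mu> (\<lambda>\<omega>. (Phi phi n v (U n \<omega>))\<^sup>2)"
proof (rule integrable_square_bounded[OF _ abs_Phi_le[OF phi_bounded]])
  have [measurable]: "U n \<in> borel_measurable \<mu>"
    using assms U_measurable by auto
  show "(\<lambda>\<omega>. Phi phi n v (U n \<omega>)) \<in> borel_measurable \<mu>"
    by measurable
qed

lemma square_integrable_target_diff:
  assumes "n < N"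
  shows "integrable \<mu> (\<lambda>\<omega>. (target phi g N n \<theta> (V n \<omega>) - target phi g N n \<theta>' (V n \<omega>))\<^sup>2)"
proof (rule integrable_square_bounded)
  have [measurable]: "V n \<in> borel_measurable \<mu>"
    using assms V_measurable by auto
  show "(\<lambda>\<omega>. target phi g N n \<theta> (V n \<omega>) - target phi g N n \<theta>' (V n \<omega>)) \<in> borel_measurable \<mu>"
    by measurable
  fix \<omega>
  have "\<bar>Phi phi (Suc n) (\<theta> - \<theta>') (V n \<omega>)\<bar> \<le> B * (\<Sum>k\<in>UNIV. \<bar>(\<theta> - \<theta>') $ k\<bar>)"
    by (rule abs_Phi_le[OF phi_bounded])
  moreover have "0 \<le> B * (\<Sum>k\<in>UNIV. \<bar>(\<theta> - \<theta>') $ k\<bar>)"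
    using B_nonneg by (simp add: sum_nonneg)
  ultimately show "\<bar>target phi g N n \<theta> (V n \<omega>) - target phi g N n \<theta>' (V n \<omega>)\<bar>
      \<le> B * (\<Sum>k\<in>UNIV. \<bar>(\<theta> - \<theta>') $ k\<bar>)"
    using abs_target_diff_le[of phi g N n \<theta> "V n \<omega>" \<theta>'] by (simp split: if_splits)
qed

lemma square_integrable_phi_target:
  assumes "n < N"
  shows "integrable \<mu> (\<lambda>\<omega>. (phi i (U n \<omega>) n * target phi g N n \<theta> (V n \<omega>))\<^sup>2)"
proof -
  have [measurable]: "U n \<in> borel_measurable \<mu>" "V n \<in> borel_measurable \<mu>"
    using assms U_measurable V_measurable by auto
  have measurable: "(\<lambda>\<omega>. (phi i (U n \<omega>) n * target phi g N n \<theta> (V n \<omega>))\<^sup>2) \<in> borel_measurable \<mu>"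
    by measurable
  define C where "C = B * (\<Sum>k\<in>UNIV. \<bar>\<theta> $ k\<bar>)"
  have bound: "(phi i (U n \<omega>) n * target phi g N n \<theta> (V n \<omega>))\<^sup>2 \<le> 2 * B\<^sup>2 * ((g (V n \<omega>))\<^sup>2 + C\<^sup>2)" for \<omega>
  proof -
    have "\<bar>phi i (U n \<omega>) n * target phi g N n \<theta> (V n \<omega>)\<bar> \<le> B * (\<bar>g (V n \<omega>)\<bar> + C)"
      unfolding abs_mult C_def by (intro mult_mono phi_bounded abs_target_le B_nonneg) auto
    then have "\<bar>phi i (U n \<omega>) n * target phi g N n \<theta> (V n \<omega>)\<bar>\<^sup>2 \<le> (B * (\<bar>g (V n \<omega>)\<bar> + C))\<^sup>2"
      by (rule power_mono) simp
    then have "(phi i (U n \<omega>) n * target phi g N n \<theta> (V n \<omega>))\<^sup>2 \<le> B\<^sup>2 * (\<bar>g (V n \<omega>)\<bar> + C)\<^sup>2"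
      by (simp add: power_mult_distrib)
    also have "\<dots> \<le> B\<^sup>2 * (2 * ((g (V n \<omega>))\<^sup>2 + C\<^sup>2))"
      using zero_le_power2[of "\<bar>g (V n \<omega>)\<bar> - C"]
      by (intro mult_left_mono) (simp_all add: power2_eq_square algebra_simps)
    finally show ?thesis
      by (simp add: algebra_simps)
  qed
  have majorant: "integrable \<mu> (\<lambda>\<omega>. 2 * B\<^sup>2 * ((g (V n \<omega>))\<^sup>2 + C\<^sup>2))"
    using g_square_integrable[OF assms] by simp
  show ?thesis
  proof (rule Bochner_Integration.integrable_bound[OF majorant measurable AE_I2])
    fix \<omega>
    have "0 \<le> 2 * B\<^sup>2 * ((g (V n \<omega>))\<^sup>2 + C\<^sup>2)"
      by simp
    with bound[of \<omega>] show "norm ((phi i (U n \<omega>) n * target phi g N n \<theta> (V n \<omega>))\<^sup>2)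
        \<le> norm (2 * B\<^sup>2 * ((g (V n \<omega>))\<^sup>2 + C\<^sup>2))"
      by (simp only: real_norm_def abs_of_nonneg zero_le_power2)
  qed
qed

lemma integrable_phi_target:
  assumes "n < N"
  shows "integrable \<mu> (\<lambda>\<omega>. phi i (U n \<omega>) n * target phi g N n \<theta> (V n \<omega>))"
proof (rule square_integrable_imp_integrable[OF _ square_integrable_phi_target[OF assms]])
  have [measurable]: "U n \<in> borel_measurable \<mu>" "V n \<in> borel_measurable \<mu>"
    using assms U_measurable V_measurable by auto
  show "(\<lambda>\<omega>. phi i (U n \<omega>) n * target phi g N n \<theta> (V n \<omega>)) \<in> borel_measurable \<mu>"
    by measurable
qed

lemma qform_gram: "qform G v = (\<Sum>n<N. \<integral>\<omega>. (Phi phi n v (U n \<omega>))\<^sup>2 \<partial>\<mu>)"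
proof -
  have int: "integrable \<mu> (\<lambda>\<omega>. phi i (U n \<omega>) n * phi l (U n \<omega>) n)" if "n < N" for i l n
  proof (rule integrable_bounded)
    have [measurable]: "U n \<in> borel_measurable \<mu>"
      using that U_measurable by auto
    show "(\<lambda>\<omega>. phi i (U n \<omega>) n * phi l (U n \<omega>) n) \<in> borel_measurable \<mu>"
      by measurable
    show "\<bar>phi i (U n \<omega>) n * phi l (U n \<omega>) n\<bar> \<le> B * B" for \<omega>
      unfolding abs_mult by (intro mult_mono phi_bounded B_nonneg) auto
  qed
  have "(\<Sum>n<N. \<integral>\<omega>. (Phi phi n v (U n \<omega>))\<^sup>2 \<partial>\<mu>)
      = (\<Sum>n<N. \<integral>\<omega>. (\<Sum>i\<in>UNIV. \<Sum>l\<in>UNIV. v $ i * v $ l * (phi i (U n \<omega>) n * phi l (U n \<omega>) n)) \<partial>\<mu>)"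
    by (simp add: Phi_def power2_eq_square sum_product mult_ac)
  also have "\<dots> = (\<Sum>n<N. \<Sum>i\<in>UNIV. \<Sum>l\<in>UNIV. v $ i * v $ l * \<integral>\<omega>. phi i (U n \<omega>) n * phi l (U n \<omega>) n \<partial>\<mu>)"
    using int by (intro sum.cong refl) (simp add: integral_sum)
  also have "\<dots> = (\<Sum>i\<in>UNIV. \<Sum>l\<in>UNIV. v $ i * v $ l * G $ i $ l)"
    by (simp add: gram_def sum_distrib_left sum.swap[of _ "{..<N}"])
  also have "\<dots> = qform G v"
    by (simp add: qform_def inner_vec_def matrix_vector_mult_def sum_distrib_left mult_ac)
  finally show ?thesis ..
qed

lemma gram_symmetric: "transpose G = G"
  by (simp add: transpose_def gram_def vec_eq_iff mult.commute)

lemma qform_gram_nonneg: "0 \<le> qform G v"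
  unfolding qform_gram by (intro sum_nonneg integral_nonneg_AE) auto

lemma gram_mult_lsq_step:
  assumes "invertible G"
  shows "G *v T \<theta> = \<alpha> *\<^sub>R regr \<mu> U V N phi g \<theta>"
  using assms matrix_inv_right[OF assms]
  by (simp add: lsq_step_def matrix_vector_mult_scaleR matrix_vector_mul_assoc)

lemma integrable_phi_target_diff:
  assumes "n < N"
  shows "integrable \<mu> (\<lambda>\<omega>. c * phi i (U n \<omega>) n * (target phi g N n \<theta> (V n \<omega>) - target phi g N n \<theta>' (V n \<omega>)))"
  using integrable_phi_target[OF assms, of i \<theta>] integrable_phi_target[OF assms, of i \<theta>']
  by (simp add: right_diff_distrib mult.assoc)

lemma regr_diff:
  "regr \<mu> U V N phi g \<theta> - regr \<mu> U V N phi g \<theta>'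
    = (\<chi> i. \<Sum>n<N. \<integral>\<omega>. phi i (U n \<omega>) n * (target phi g N n \<theta> (V n \<omega>) - target phi g N n \<theta>' (V n \<omega>)) \<partial>\<mu>)"
proof -
  have "(\<integral>\<omega>. phi i (U n \<omega>) n * target phi g N n \<theta> (V n \<omega>) \<partial>\<mu>)
      - (\<integral>\<omega>. phi i (U n \<omega>) n * target phi g N n \<theta>' (V n \<omega>) \<partial>\<mu>)
      = (\<integral>\<omega>. phi i (U n \<omega>) n * (target phi g N n \<theta> (V n \<omega>) - target phi g N n \<theta>' (V n \<omega>)) \<partial>\<mu>)"
    if "n < N" for i n
    using integrable_phi_target[OF that] by (simp add: right_diff_distrib)
  then show ?thesis
    by (simp add: regr_def vec_eq_iff flip: sum_subtractf)
qed

lemma qform_gram_lsq_step_diff: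
  assumes "invertible G"
  shows "qform G (T \<theta> - T \<theta>') = \<alpha> * (\<Sum>n<N. \<integral>\<omega>. Phi phi n (T \<theta> - T \<theta>') (U n \<omega>)
    * (target phi g N n \<theta> (V n \<omega>) - target phi g N n \<theta>' (V n \<omega>)) \<partial>\<mu>)"
proof -
  define v where "v = T \<theta> - T \<theta>'"
  define D where "D n \<omega> = target phi g N n \<theta> (V n \<omega>) - target phi g N n \<theta>' (V n \<omega>)" for n \<omega>
  have "qform G v = \<alpha> * (v \<bullet> (regr \<mu> U V N phi g \<theta> - regr \<mu> U V N phi g \<theta>'))"
    by (simp add: qform_def v_def matrix_vector_mult_diff_distrib gram_mult_lsq_step[OF assms]
        inner_diff_right right_diff_distrib)
  also have "\<dots> = \<alpha> * (\<Sum>k\<in>UNIV. \<Sum>n<N. \<integral>\<omega>. v $ k * phi k (U n \<omega>) n * D n \<omega> \<partial>\<mu>)"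
    unfolding regr_diff D_def by (simp add: inner_vec_def sum_distrib_left mult.assoc)
  also have "\<dots> = \<alpha> * (\<Sum>n<N. \<integral>\<omega>. Phi phi n v (U n \<omega>) * D n \<omega> \<partial>\<mu>)"
    using integrable_phi_target_diff
    by (simp add: sum.swap[of _ UNIV] Phi_def sum_distrib_right D_def flip: integral_sum)
  finally show ?thesis
    unfolding v_def D_def .
qed

lemma sum_integral_target_diff_square_le:
  "(\<Sum>n<N. \<integral>\<omega>. (target phi g N n \<theta> (V n \<omega>) - target phi g N n \<theta>' (V n \<omega>))\<^sup>2 \<partial>\<mu>)
    \<le> qform G (\<theta> - \<theta>')"
proof -
  have "(\<integral>\<omega>. (target phi g N n \<theta> (V n \<omega>) - target phi g N n \<theta>' (V n \<omega>))\<^sup>2 \<partial>\<mu>)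
      \<le> (if Suc n = N then 0 else \<integral>\<omega>. (Phi phi (Suc n) (\<theta> - \<theta>') (U (Suc n) \<omega>))\<^sup>2 \<partial>\<mu>)"
    if "n < N" for n
  proof (cases "Suc n = N")
    case False
    with that have "(\<integral>\<omega>. (target phi g N n \<theta> (V n \<omega>) - target phi g N n \<theta>' (V n \<omega>))\<^sup>2 \<partial>\<mu>)
        \<le> (\<integral>\<omega>. (Phi phi (Suc n) (\<theta> - \<theta>') (U (Suc n) \<omega>))\<^sup>2 \<partial>\<mu>)"
      using square_integrable_Phi abs_target_diff_le[of phi g N n \<theta> _ \<theta>'] V_shift
      by (intro integral_mono') (simp_all add: abs_le_square_iff)
    with False show ?thesis
      by simp
  qed (simp add: target_def)
  then have "(\<Sum>n<N. \<integral>\<omega>. (target phi g N n \<theta> (V n \<omega>) - target phi g N n \<theta>' (V n \<omega>))\<^sup>2 \<partial>\<mu>)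
      \<le> (\<Sum>n<N. if Suc n = N then 0 else \<integral>\<omega>. (Phi phi (Suc n) (\<theta> - \<theta>') (U (Suc n) \<omega>))\<^sup>2 \<partial>\<mu>)"
    by (intro sum_mono) simp
  also have "\<dots> \<le> qform G (\<theta> - \<theta>')"
    unfolding qform_gram by (intro sum_lessThan_shift_le integral_nonneg_AE) simp
  finally show ?thesis .
qed

lemma lsq_step_contraction:
  assumes "invertible G"
  shows "qform G (T \<theta> - T \<theta>') \<le> \<alpha>\<^sup>2 * qform G (\<theta> - \<theta>')"
proof -
  define v where "v = T \<theta> - T \<theta>'"
  define D where "D n \<omega> = target phi g N n \<theta> (V n \<omega>) - target phi g N n \<theta>' (V n \<omega>)" for n \<omega>
  have am_gm: "\<alpha> * (x * y) \<le> x\<^sup>2 / 2 + \<alpha>\<^sup>2 * y\<^sup>2 / 2" for x y :: real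
    using zero_le_power2[of "x - \<alpha> * y"] by (simp add: power2_eq_square algebra_simps)
  have "\<alpha> * (\<integral>\<omega>. Phi phi n v (U n \<omega>) * D n \<omega> \<partial>\<mu>)
      \<le> (\<integral>\<omega>. (Phi phi n v (U n \<omega>))\<^sup>2 / 2 + \<alpha>\<^sup>2 * (D n \<omega>)\<^sup>2 / 2 \<partial>\<mu>)" if "n < N" for n
  proof -
    have "(\<integral>\<omega>. \<alpha> * (Phi phi n v (U n \<omega>) * D n \<omega>) \<partial>\<mu>)
        \<le> (\<integral>\<omega>. (Phi phi n v (U n \<omega>))\<^sup>2 / 2 + \<alpha>\<^sup>2 * (D n \<omega>)\<^sup>2 / 2 \<partial>\<mu>)"
      using square_integrable_Phi[OF that] square_integrable_target_diff[OF that]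
      by (intro integral_mono') (simp_all add: am_gm D_def)
    then show ?thesis
      by simp
  qed
  then have "qform G v \<le> (\<Sum>n<N. \<integral>\<omega>. (Phi phi n v (U n \<omega>))\<^sup>2 / 2 + \<alpha>\<^sup>2 * (D n \<omega>)\<^sup>2 / 2 \<partial>\<mu>)"
    unfolding v_def D_def qform_gram_lsq_step_diff[OF assms] sum_distrib_left by (intro sum_mono) simp
  also have "\<dots> = qform G v / 2 + \<alpha>\<^sup>2 / 2 * (\<Sum>n<N. \<integral>\<omega>. (D n \<omega>)\<^sup>2 \<partial>\<mu>)"
    using square_integrable_Phi square_integrable_target_diff
    by (simp add: qform_gram sum.distrib sum_divide_distrib sum_distrib_left integral_add D_def)
  finally have "qform G v \<le> \<alpha>\<^sup>2 * (\<Sum>n<N. \<integral>\<omega>. (D n \<omega>)\<^sup>2 \<partial>\<mu>)"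
    by simp
  then show ?thesis
    unfolding v_def D_def using sum_integral_target_diff_square_le alpha_nonneg
    by (meson mult_left_mono order_trans zero_le_power2)
qed

lemma lsq_step_unique_fixpoint:
  assumes "invertible G" "\<alpha> < 1"
  shows "\<exists>!\<theta>. T \<theta> = \<theta>"
proof -
  obtain lam where "0 < lam" "\<And>v. lam * (norm v)\<^sup>2 \<le> qform G v"
    using qform_pd_of_invertible[OF gram_symmetric qform_gram_nonneg assms(1)] by blast
  then show ?thesis
    by (rule qform_contraction_unique_fixpoint[OF _ _ lsq_step_contraction[OF assms(1)]])
      (use alpha_nonneg assms(2) in \<open>simp_all add: power_less_one_iff\<close>)
qed

end

lemma lsq_setting_count_space:
  fixes Z :: "nat \<Rightarrow> nat \<Rightarrow> real^'d"
  assumes "\<And>k n. (\<lambda>x. phi k x n) \<in> borel_measurable borel" "\<And>k x n. \<bar>phi k x n\<bar> \<le> B"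
    and "g \<in> borel_measurable borel" "0 \<le> \<alpha>"
  shows "lsq_setting (count_space {..<m}) (\<lambda>n j. Z j n) (\<lambda>n j. Z j (Suc n)) N phi g \<alpha> B"
  by (intro lsq_setting.intro lsq_setting_axioms.intro finite_measure_count_space)
    (use assms in \<open>simp_all add: integrable_count_space\<close>)

lemma lsq_step_iterates_tendsto:
  fixes \<mu> :: "nat \<Rightarrow> 'a measure" and U V :: "nat \<Rightarrow> nat \<Rightarrow> 'a \<Rightarrow> real^'d"
    and phi :: "'k::finite \<Rightarrow> real^'d \<Rightarrow> nat \<Rightarrow> real"
  assumes pop: "lsq_setting M X Z N phi g \<alpha> B" and inv: "invertible (gram M X N phi)"
    and fixpoint: "lsq_step M X Z N phi g \<alpha> t = t"
    and samples: "\<And>i. lsq_setting (\<mu> i) (U i) (V i) N phi g \<alpha> B" and c: "\<And>i. 0 < c i"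
    and gram_lim: "(\<lambda>i. c i *\<^sub>R gram (\<mu> i) (U i) N phi) \<longlonglongrightarrow> gram M X N phi"
    and regr_lim: "(\<lambda>i. c i *\<^sub>R regr (\<mu> i) (U i) (V i) N phi g t) \<longlonglongrightarrow> regr M X Z N phi g t"
    and \<alpha>: "0 < \<alpha>" "\<alpha> < 1"
  shows "(\<lambda>i. (lsq_step (\<mu> i) (U i) (V i) N phi g \<alpha> ^^ i) t0) \<longlonglongrightarrow> t"
proof -
  define H where "H i = c i *\<^sub>R gram (\<mu> i) (U i) N phi" for i
  define T where "T i = lsq_step (\<mu> i) (U i) (V i) N phi g \<alpha>" for i
  obtain lam where lam: "0 < lam" "\<And>v. lam * (norm v)\<^sup>2 \<le> qform (gram M X N phi) v"
    using qform_pd_of_invertible[OF lsq_setting.gram_symmetric[OF pop] lsq_setting.qform_gram_nonneg[OF pop] inv]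
    by blast
  have H_lim: "H \<longlonglongrightarrow> gram M X N phi"
    unfolding H_def[abs_def] by (rule gram_lim)
  have H_symmetric: "transpose (H i) = H i" for i
    using lsq_setting.gram_symmetric[OF samples] by (simp add: H_def transpose_scalar)
  have gram_invertible: "eventually (\<lambda>i. invertible (gram (\<mu> i) (U i) N phi)) sequentially"
    using eventually_invertible_of_tendsto[OF H_lim lam]
  proof eventually_elim
    case (elim i)
    then have "invertible ((1 / c i) *\<^sub>R H i)"
      using c[of i] by (intro scalar_invertible) auto
    then show ?case
      using c[of i] by (simp add: H_def)
  qed
  have "eventually (\<lambda>i. \<forall>\<theta> \<theta>'. qform (H i) (T i \<theta> - T i \<theta>') \<le> \<alpha>\<^sup>2 * qform (H i) (\<theta> - \<theta>')) sequentially"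
    using gram_invertible
  proof eventually_elim
    case (elim i)
    show ?case
      using lsq_setting.lsq_step_contraction[OF samples elim] c[of i]
      by (auto simp: H_def T_def qform_scaleR_left mult.left_commute intro: mult_left_mono)
  qed
  moreover have "(\<lambda>i. T i t) \<longlonglongrightarrow> t"
  proof (rule matrix_equation_solution_tendsto[OF H_lim lam])
    show "eventually (\<lambda>i. H i *v T i t = \<alpha> *\<^sub>R (c i *\<^sub>R regr (\<mu> i) (U i) (V i) N phi g t)) sequentially"
      using gram_invertible
      by eventually_elim (simp add: H_def T_def lsq_setting.gram_mult_lsq_step[OF samples] flip: scaleR_matrix_vector_assoc)
    show "(\<lambda>i. \<alpha> *\<^sub>R (c i *\<^sub>R regr (\<mu> i) (U i) (V i) N phi g t)) \<longlonglongrightarrow> gram M X N phi *v t"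
      using tendsto_scaleR[OF tendsto_const regr_lim, of \<alpha>] lsq_setting.gram_mult_lsq_step[OF pop inv, of t] fixpoint
      by simp
  qed
  ultimately show ?thesis
    unfolding T_def[symmetric] by (rule iterates_tendsto_fixpoint[OF H_lim lam H_symmetric _ \<alpha>])
qed

section \<open>Sampling\<close>

lemma path_measurable:
  assumes "\<And>n. n \<le> N \<Longrightarrow> Z n \<in> borel_measurable M"
  shows "path N Z \<in> measurable M (PiM {..N} (\<lambda>_. borel))"
  unfolding path_def[abs_def] by (rule measurable_restrict) (use assms in auto)

lemma distPi_Phi_le:
  fixes phi :: "'k::finite \<Rightarrow> real^'d \<Rightarrow> nat \<Rightarrow> real"
  assumes "prob_space M" "\<And>n. n < N \<Longrightarrow> X n \<in> borel_measurable M" "\<And>k x n. \<bar>phi k x n\<bar> \<le> B"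
  shows "distPi M X N (\<lambda>n. Phi phi n \<theta>) (\<lambda>n. Phi phi n \<theta>') \<le> B * (\<Sum>k\<in>UNIV. \<bar>\<theta> $ k - \<theta>' $ k\<bar>)"
proof -
  define D where "D = B * (\<Sum>k\<in>UNIV. \<bar>\<theta> $ k - \<theta>' $ k\<bar>)"
  have D_nonneg: "0 \<le> D"
    using assms(3)[of undefined undefined 0] unfolding D_def by (intro mult_nonneg_nonneg sum_nonneg) auto
  have "sqrt (\<integral>x. (Phi phi n \<theta> x - Phi phi n \<theta>' x)\<^sup>2 \<partial>distr M borel (X n)) \<le> D" if "n < N" for n
  proof -
    interpret law: prob_space "distr M borel (X n)"
      using assms(1,2) that by (simp add: prob_space.prob_space_distr)
    have "\<bar>Phi phi n \<theta> x - Phi phi n \<theta>' x\<bar> \<le> D" for x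
      using abs_Phi_le[of phi B n "\<theta> - \<theta>'" x, OF assms(3)] by (simp add: D_def Phi_diff)
    then have "(Phi phi n \<theta> x - Phi phi n \<theta>' x)\<^sup>2 \<le> D\<^sup>2" for x
      using D_nonneg by (simp add: abs_le_square_iff[symmetric])
    then have "(\<integral>x. (Phi phi n \<theta> x - Phi phi n \<theta>' x)\<^sup>2 \<partial>distr M borel (X n)) \<le> (\<integral>x. D\<^sup>2 \<partial>distr M borel (X n))"
      by (intro integral_mono') simp_all
    also have "\<dots> = D\<^sup>2"
      using law.prob_space by simp
    finally show ?thesis
      using D_nonneg real_sqrt_le_mono by fastforce
  qed
  then have "distPi M X N (\<lambda>n. Phi phi n \<theta>) (\<lambda>n. Phi phi n \<theta>') \<le> 1 / real N * (\<Sum>n<N. D)"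
    unfolding distPi_def by (intro mult_left_mono sum_mono) auto
  also have "\<dots> \<le> D"
    using D_nonneg by (cases "N = 0") simp_all
  finally show ?thesis
    unfolding D_def .
qed

lemma distPi_nonneg: "0 \<le> distPi M X N J J'"
  unfolding distPi_def by (intro mult_nonneg_nonneg sum_nonneg real_sqrt_ge_zero integral_nonneg_AE) auto

lemma distPi_Phi_tendsto:
  fixes phi :: "'k::finite \<Rightarrow> real^'d \<Rightarrow> nat \<Rightarrow> real"
  assumes "prob_space M" "\<And>n. n < N \<Longrightarrow> X n \<in> borel_measurable M" "\<And>k x n. \<bar>phi k x n\<bar> \<le> B"
    and "\<theta>s \<longlonglongrightarrow> \<theta>"
  shows "(\<lambda>i. distPi M X N (\<lambda>n. Phi phi n (\<theta>s i)) (\<lambda>n. Phi phi n \<theta>)) \<longlonglongrightarrow> 0"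
proof (rule tendsto_sandwich[OF _ _ tendsto_const])
  show "eventually (\<lambda>i. 0 \<le> distPi M X N (\<lambda>n. Phi phi n (\<theta>s i)) (\<lambda>n. Phi phi n \<theta>)) sequentially"
    by (simp add: distPi_nonneg)
  show "eventually (\<lambda>i. distPi M X N (\<lambda>n. Phi phi n (\<theta>s i)) (\<lambda>n. Phi phi n \<theta>)
      \<le> B * (\<Sum>k\<in>UNIV. \<bar>\<theta>s i $ k - \<theta> $ k\<bar>)) sequentially"
    using distPi_Phi_le[where M=M and X=X and N=N and phi=phi and B=B, OF assms(1-3)] by simp
  have "(\<lambda>i. B * (\<Sum>k\<in>UNIV. \<bar>\<theta>s i $ k - \<theta> $ k\<bar>)) \<longlonglongrightarrow> B * (\<Sum>k\<in>(UNIV::'k set). \<bar>\<theta> $ k - \<theta> $ k\<bar>)"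
    by (intro tendsto_mult tendsto_const tendsto_sum tendsto_rabs tendsto_diff tendsto_vec_nth assms(4))
  then show "(\<lambda>i. B * (\<Sum>k\<in>UNIV. \<bar>\<theta>s i $ k - \<theta> $ k\<bar>)) \<longlonglongrightarrow> 0"
    by simp
qed

locale iid_paths = prob_space M for M :: "'w measure" +
  fixes X :: "nat \<Rightarrow> 'w \<Rightarrow> real^'d" and Y :: "nat \<Rightarrow> nat \<Rightarrow> 'w \<Rightarrow> real^'d" and N :: nat
  assumes X_measurable: "\<And>n. n \<le> N \<Longrightarrow> X n \<in> borel_measurable M"
    and Y_measurable: "\<And>j n. n \<le> N \<Longrightarrow> Y j n \<in> borel_measurable M"
    and indep_paths: "indep_vars (\<lambda>_. PiM {..N} (\<lambda>_. borel)) (\<lambda>j. path N (Y j)) UNIV"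
    and identically_distributed:
      "\<And>j. distr M (PiM {..N} (\<lambda>_. borel)) (path N (Y j)) = distr M (PiM {..N} (\<lambda>_. borel)) (path N X)"
begin

lemma path_X_measurable[measurable]: "path N X \<in> measurable M (PiM {..N} (\<lambda>_. borel))"
  by (rule path_measurable[OF X_measurable])

lemma path_Y_measurable[measurable]: "path N (Y j) \<in> measurable M (PiM {..N} (\<lambda>_. borel))"
  by (rule path_measurable[OF Y_measurable])

lemma integrable_path_Y_iff:
  fixes F :: "(nat \<Rightarrow> real^'d) \<Rightarrow> real"
  assumes [measurable]: "F \<in> borel_measurable (PiM {..N} (\<lambda>_. borel))"
  shows "integrable M (\<lambda>\<omega>. F (path N (Y j) \<omega>)) \<longleftrightarrow> integrable M (\<lambda>\<omega>. F (path N X \<omega>))"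
proof -
  have "integrable M (\<lambda>\<omega>. F (path N (Y j) \<omega>)) \<longleftrightarrow> integrable (distr M (PiM {..N} (\<lambda>_. borel)) (path N (Y j))) F"
    by (rule integrable_distr_eq[symmetric]) simp_all
  also have "\<dots> \<longleftrightarrow> integrable M (\<lambda>\<omega>. F (path N X \<omega>))"
    unfolding identically_distributed by (rule integrable_distr_eq) simp_all
  finally show ?thesis .
qed

lemma integral_path_Y:
  fixes F :: "(nat \<Rightarrow> real^'d) \<Rightarrow> real"
  assumes [measurable]: "F \<in> borel_measurable (PiM {..N} (\<lambda>_. borel))"
  shows "(\<integral>\<omega>. F (path N (Y j) \<omega>) \<partial>M) = (\<integral>\<omega>. F (path N X \<omega>) \<partial>M)"
proof -
  have "(\<integral>\<omega>. F (path N (Y j) \<omega>) \<partial>M) = integral\<^sup>L (distr M (PiM {..N} (\<lambda>_. borel)) (path N (Y j))) F"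
    by (rule integral_distr[symmetric]) simp_all
  also have "\<dots> = (\<integral>\<omega>. F (path N X \<omega>) \<partial>M)"
    unfolding identically_distributed by (rule integral_distr) simp_all
  finally show ?thesis .
qed

lemma AE_path_average_tendsto:
  fixes F :: "(nat \<Rightarrow> real^'d) \<Rightarrow> real"
  assumes [measurable]: "F \<in> borel_measurable (PiM {..N} (\<lambda>_. borel))"
    and square_int: "integrable M (\<lambda>\<omega>. (F (path N X \<omega>))\<^sup>2)"
  shows "AE \<omega> in M. (\<lambda>i. (\<Sum>j<8^i. F (path N (Y j) \<omega>)) / 8^i) \<longlonglongrightarrow> (\<integral>\<omega>. F (path N X \<omega>) \<partial>M)"
proof (rule AE_average_pow8_tendsto)
  show "indep_vars (\<lambda>_. borel) (\<lambda>j \<omega>. F (path N (Y j) \<omega>)) UNIV"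
    by (rule indep_vars_compose2[OF indep_paths]) simp
  show "integrable M (\<lambda>\<omega>. (F (path N (Y j) \<omega>))\<^sup>2)" for j
    using integrable_path_Y_iff[of "\<lambda>p. (F p)\<^sup>2"] square_int by simp
  show "expectation (\<lambda>\<omega>. F (path N (Y j) \<omega>)) = expectation (\<lambda>\<omega>. F (path N X \<omega>))" for j
    by (rule integral_path_Y) simp
  show "expectation (\<lambda>\<omega>. (F (path N (Y j) \<omega>) - expectation (\<lambda>\<omega>. F (path N X \<omega>)))\<^sup>2)
      \<le> expectation (\<lambda>\<omega>. (F (path N X \<omega>) - expectation (\<lambda>\<omega>. F (path N X \<omega>)))\<^sup>2)" for j
    using integral_path_Y[of "\<lambda>p. (F p - expectation (\<lambda>\<omega>. F (path N X \<omega>)))\<^sup>2"] by simp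
qed simp

lemma path_component_measurable:
  "n \<le> N \<Longrightarrow> (\<lambda>p. p n) \<in> measurable (PiM {..N} (\<lambda>_. borel :: (real^'d) measure)) borel"
  using measurable_component_singleton[of n "{..N}" "\<lambda>_. borel"] by simp

lemma AE_sample_gram_tendsto:
  assumes "lsq_setting M X (\<lambda>n. X (Suc n)) N phi g \<alpha> B"
  shows "AE \<omega> in M. (\<lambda>i. (1 / 8^i) *\<^sub>R gram (count_space {..<8^i}) (\<lambda>n j. Y j n \<omega>) N phi)
    \<longlonglongrightarrow> gram M X N phi"
proof -
  interpret population: lsq_setting M X "\<lambda>n. X (Suc n)" N phi g \<alpha> B
    by (rule assms)
  define F where "F k l n p = phi k (p n) n * phi l (p n) n" for k l n and p :: "nat \<Rightarrow> real^'d"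
  have F_measurable: "F k l n \<in> borel_measurable (PiM {..N} (\<lambda>_. borel))" if "n < N" for k l n
    unfolding F_def[abs_def] using that
    by (intro borel_measurable_times measurable_compose[OF path_component_measurable population.phi_measurable]) auto
  have F_square_integrable: "integrable M (\<lambda>\<omega>. (F k l n (path N X \<omega>))\<^sup>2)" if "n < N" for k l n
  proof (rule population.integrable_square_bounded)
    show "(\<lambda>\<omega>. F k l n (path N X \<omega>)) \<in> borel_measurable M"
      using measurable_compose[OF path_X_measurable F_measurable[OF that]] .
    show "\<bar>F k l n (path N X \<omega>)\<bar> \<le> B * B" for \<omega>
      unfolding F_def abs_mult by (intro mult_mono population.phi_bounded population.B_nonneg) auto
  qed
  have "AE \<omega> in M. \<forall>k\<in>UNIV. \<forall>l\<in>UNIV. \<forall>n\<in>{..<N}.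
      (\<lambda>i. (\<Sum>j<8^i. F k l n (path N (Y j) \<omega>)) / 8^i) \<longlonglongrightarrow> (\<integral>\<omega>. F k l n (path N X \<omega>) \<partial>M)"
    using F_measurable F_square_integrable by (intro AE_finite_allI AE_path_average_tendsto) auto
  then show ?thesis
  proof eventually_elim
    case (elim \<omega>)
    have sample_entries: "((1 / 8^i) *\<^sub>R gram (count_space {..<8^i}) (\<lambda>n j. Y j n \<omega>) N phi) $ k $ l
        = (\<Sum>n<N. (\<Sum>j<8^i. F k l n (path N (Y j) \<omega>)) / 8^i)" for i k l
      by (auto simp: gram_def F_def path_def lebesgue_integral_count_space_finite sum_divide_distrib
          intro!: sum.cong)
    have population_entries: "gram M X N phi $ k $ l = (\<Sum>n<N. \<integral>\<omega>. F k l n (path N X \<omega>) \<partial>M)" for k l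
      by (auto simp: gram_def F_def path_def intro!: sum.cong)
    show ?case
      by (intro vec_tendstoI) (simp only: sample_entries population_entries, intro tendsto_sum, use elim in blast)
  qed
qed

lemma AE_sample_regr_tendsto:
  assumes "lsq_setting M X (\<lambda>n. X (Suc n)) N phi g \<alpha> B"
  shows "AE \<omega> in M. (\<lambda>i. (1 / 8^i) *\<^sub>R regr (count_space {..<8^i}) (\<lambda>n j. Y j n \<omega>) (\<lambda>n j. Y j (Suc n) \<omega>) N phi g \<theta>)
    \<longlonglongrightarrow> regr M X (\<lambda>n. X (Suc n)) N phi g \<theta>"
proof -
  interpret population: lsq_setting M X "\<lambda>n. X (Suc n)" N phi g \<alpha> B
    by (rule assms)
  define F where "F k n p = phi k (p n) n * target phi g N n \<theta> (p (Suc n))" for k n and p :: "nat \<Rightarrow> real^'d"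
  have F_measurable: "F k n \<in> borel_measurable (PiM {..N} (\<lambda>_. borel))" if "n < N" for k n
    unfolding F_def[abs_def] using that
    by (intro borel_measurable_times measurable_compose[OF path_component_measurable population.phi_measurable]
        measurable_compose[OF path_component_measurable population.target_measurable]) auto
  have F_square_integrable: "integrable M (\<lambda>\<omega>. (F k n (path N X \<omega>))\<^sup>2)" if "n < N" for k n
  proof -
    have "(\<lambda>\<omega>. (F k n (path N X \<omega>))\<^sup>2) = (\<lambda>\<omega>. (phi k (X n \<omega>) n * target phi g N n \<theta> (X (Suc n) \<omega>))\<^sup>2)"
      using that by (simp add: F_def path_def)
    then show ?thesis
      using population.square_integrable_phi_target[OF that] by simp
  qed
  have "AE \<omega> in M. \<forall>k\<in>UNIV. \<forall>n\<in>{..<N}.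
      (\<lambda>i. (\<Sum>j<8^i. F k n (path N (Y j) \<omega>)) / 8^i) \<longlonglongrightarrow> (\<integral>\<omega>. F k n (path N X \<omega>) \<partial>M)"
    using F_measurable F_square_integrable by (intro AE_finite_allI AE_path_average_tendsto) auto
  then show ?thesis
  proof eventually_elim
    case (elim \<omega>)
    have sample_entries: "((1 / 8^i) *\<^sub>R regr (count_space {..<8^i}) (\<lambda>n j. Y j n \<omega>) (\<lambda>n j. Y j (Suc n) \<omega>) N phi g \<theta>) $ k
        = (\<Sum>n<N. (\<Sum>j<8^i. F k n (path N (Y j) \<omega>)) / 8^i)" for i k
      by (auto simp: regr_def F_def path_def lebesgue_integral_count_space_finite sum_divide_distrib
          intro!: sum.cong)
    have population_entries: "regr M X (\<lambda>n. X (Suc n)) N phi g \<theta> $ k = (\<Sum>n<N. \<integral>\<omega>. F k n (path N X \<omega>) \<partial>M)" for k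
      by (auto simp: regr_def F_def path_def intro!: sum.cong)
    show ?case
      by (intro vec_tendstoI) (simp only: sample_entries population_entries, intro tendsto_sum, use elim in blast)
  qed
qed

lemma AE_sample_iterates_tendsto:
  assumes population: "lsq_setting M X (\<lambda>n. X (Suc n)) N phi g \<alpha> B"
    and "invertible (gram M X N phi)" "lsq_step M X (\<lambda>n. X (Suc n)) N phi g \<alpha> t = t"
    and "0 < \<alpha>" "\<alpha> < 1"
  shows "AE \<omega> in M. (\<lambda>i. (empMap Y (8^i) \<omega> N phi g \<alpha> ^^ i) \<theta>0) \<longlonglongrightarrow> t"
  using AE_sample_gram_tendsto[OF population] AE_sample_regr_tendsto[OF population, of t]
proof eventually_elim
  case (elim \<omega>)
  have "lsq_setting (count_space {..<m}) (\<lambda>n j. Y j n \<omega>) (\<lambda>n j. Y j (Suc n) \<omega>) N phi g \<alpha> B" for m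
    using lsq_setting.phi_measurable[OF population] lsq_setting.phi_bounded[OF population]
      lsq_setting.g_measurable[OF population] lsq_setting.alpha_nonneg[OF population]
    by (rule lsq_setting_count_space)
  then show ?case
    unfolding empMap_eq_lsq_step
    by (rule lsq_step_iterates_tendsto[OF population assms(2,3) _ _ elim]) (use assms(4,5) in simp_all)
qed

end

theorem theorem10:
  fixes M :: "'w measure"
    and X :: "nat \<Rightarrow> 'w \<Rightarrow> real^'d"
    and Y :: "nat \<Rightarrow> nat \<Rightarrow> 'w \<Rightarrow> real^'d"
    and N :: nat
    and g :: "real^'d \<Rightarrow> real"
    and alpha :: real
    and sig :: "real \<Rightarrow> real"
    and a :: "'k::finite \<Rightarrow> real^'d" and c :: "'k \<Rightarrow> real" and b :: "'k \<Rightarrow> real"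
    and \<theta>0 :: "real^'k"
  assumes "prob_space M"
    and "N \<ge> 1"
    and "\<And>n. n \<le> N \<Longrightarrow> X n \<in> borel_measurable M"
    and "markov M X N"
    and "g \<in> borel_measurable borel"
    and "\<And>x. g x \<ge> 0"
    and "\<And>n. n \<le> N \<Longrightarrow> integrable M (\<lambda>\<omega>. (g (X n \<omega>))\<^sup>2)"
    and "0 < alpha" and "alpha < 1"
    and "sig \<in> borel_measurable borel"
    and "bounded (range sig)"
    and "invertible (popGram M X N (rbf sig a c b))"
    and "\<And>j n. n \<le> N \<Longrightarrow> Y j n \<in> borel_measurable M"
    and "prob_space.indep_vars M (\<lambda>_. PiM {..N} (\<lambda>_. borel)) (\<lambda>j. path N (Y j)) UNIV"
    and "\<And>j. distr M (PiM {..N} (\<lambda>_. borel)) (path N (Y j))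
              = distr M (PiM {..N} (\<lambda>_. borel)) (path N X)"
  shows "\<exists>m :: nat \<Rightarrow> 'w \<Rightarrow> nat.
           (\<forall>i. m i \<in> measurable M (count_space UNIV)) \<and>
           (AE \<omega> in M. (\<lambda>i. distPi M X N
               (\<lambda>n. Phi (rbf sig a c b) n (thetaHat Y (m i \<omega>) \<omega> N (rbf sig a c b) g alpha \<theta>0 i))
               (\<lambda>n. Phi (rbf sig a c b) n (thetaStar M X N (rbf sig a c b) g alpha)))
             \<longlonglongrightarrow> 0)"
proof -
  interpret iid_paths M X Y N
    using assms(1,3,13-15) by (simp add: iid_paths_def iid_paths_axioms_def)
  define phi where "phi = rbf sig a c b"
  obtain B where "\<And>x. \<bar>sig x\<bar> \<le> B"
    using assms(11) by (auto simp: bounded_iff)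
  then have phi_bounded: "\<And>k x n. \<bar>phi k x n\<bar> \<le> B"
    by (simp add: phi_def rbf_def)
  have "\<And>k n. (\<lambda>x. phi k x n) \<in> borel_measurable borel"
    unfolding phi_def rbf_def using assms(10) by measurable
  then have population: "lsq_setting M X (\<lambda>n. X (Suc n)) N phi g alpha B"
    by (intro lsq_setting.intro lsq_setting_axioms.intro finite_measure_axioms)
      (use assms(3,5,7,8) phi_bounded in simp_all)
  have invertible: "invertible (gram M X N phi)"
    using assms(12) by (simp add: phi_def popGram_def gram_def)
  define \<theta>s where "\<theta>s = thetaStar M X N phi g alpha"
  have fixpoint: "lsq_step M X (\<lambda>n. X (Suc n)) N phi g alpha \<theta>s = \<theta>s"
    unfolding \<theta>s_def thetaStar_def popMap_eq_lsq_step
    by (rule theI') (rule lsq_setting.lsq_step_unique_fixpoint[OF population invertible assms(9)])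
  have "AE \<omega> in M. (\<lambda>i. thetaHat Y (8^i) \<omega> N phi g alpha \<theta>0 i) \<longlonglongrightarrow> \<theta>s"
    unfolding thetaHat_def by (rule AE_sample_iterates_tendsto[OF population invertible fixpoint assms(8,9)])
  then have "AE \<omega> in M. (\<lambda>i. distPi M X N (\<lambda>n. Phi phi n (thetaHat Y (8^i) \<omega> N phi g alpha \<theta>0 i))
      (\<lambda>n. Phi phi n \<theta>s)) \<longlonglongrightarrow> 0"
    by eventually_elim (rule distPi_Phi_tendsto[OF assms(1) _ phi_bounded], use assms(3) in simp_all)
  then show ?thesis
    unfolding phi_def \<theta>s_def by (intro exI[of _ "\<lambda>i _. 8^i"]) simp
qed

end
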